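(* For all integers $n\ge2$ and $k\ge1$, the number $T_{n,k}$ of triangles (subgraphs isomorphic to $K_3$) of $H_{n,k}$ is $$T_{n,k}=\frac{1}{2}(n-2)\left(1-\frac{n}{3}-(n-1)^{k+1}+\frac{2}{3}n^k(2n-3)\right).$$
   Context: Let $n\ge 2$ and $k\ge 1$ be integers. $H_{n,k}$ is the simple undirected graph with vertex set $V_{n,k}=\mathbb{Z}_n^k$ (so $|V_{n,k}|=n^k$), whose vertices are written as strings $x_1x_2\ldots x_k$ with $x_j\in\mathbb{Z}_n=\{0,1,\ldots,n-1\}$. Two distinct vertices are adjacent if and only if they are related by one of the following rules. For $i=0$ the prefix $x_1\ldots x_i$ is empty, and "$0\ldots0$" denotes a string of zeros completing the word to length $k$. (R1) $x_1\ldots x_{k-1}x_k\sim x_1\ldots x_{k-1}y_k$ whenever $y_k\neq x_k$. (R2) For $0\le i\le k-2$: $x_1\ldots x_i0\ldots0\sim x_1\ldots x_ix_{i+1}\ldots x_k$ whenever $x_j\neq 0$ for all $i+1\le j\le k$. (R3) For $1\le i\le k-1$: $x_1\ldots x_{i-1}x_i0\ldots0\sim x_1\ldots x_{i-1}y_i0\ldots0$ whenever $x_i,y_i\neq0$ and $x_i\ne y_i$. In particular, $H_{n,1}$ is the complete graph $K_n$. *)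

theory Defs
  imports Complex_Main
begin

text \<open>Vertices of H_{n,k}: words x_1 ... x_k over Z_n = {0,...,n-1},
  represented as lists of length k (list index j corresponds to x_{j+1}).\<close>
definition hverts :: "nat \<Rightarrow> nat \<Rightarrow> nat list set" where
  "hverts n k = {xs. length xs = k \<and> set xs \<subseteq> {..<n}}"

definition rule1 :: "nat \<Rightarrow> nat list \<Rightarrow> nat list \<Rightarrow> bool" where
  "rule1 k x y \<longleftrightarrow> (\<exists>p a b. length p = k - 1 \<and> x = p @ [a] \<and> y = p @ [b] \<and> a \<noteq> b)"

definition rule2 :: "nat \<Rightarrow> nat list \<Rightarrow> nat list \<Rightarrow> bool" where
  "rule2 k x y \<longleftrightarrow> (\<exists>i. i + 2 \<le> k \<and> length y = k \<and>
       x = take i y @ replicate (k - i) 0 \<and> (\<forall>j. i \<le> j \<and> j < k \<longrightarrow> y ! j \<noteq> 0))"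

definition rule3 :: "nat \<Rightarrow> nat list \<Rightarrow> nat list \<Rightarrow> bool" where
  "rule3 k x y \<longleftrightarrow> (\<exists>i p a b. 1 \<le> i \<and> i + 1 \<le> k \<and> length p = i - 1 \<and>
       a \<noteq> 0 \<and> b \<noteq> 0 \<and> a \<noteq> b \<and>
       x = p @ [a] @ replicate (k - i) 0 \<and> y = p @ [b] @ replicate (k - i) 0)"

definition hadj :: "nat \<Rightarrow> nat \<Rightarrow> nat list \<Rightarrow> nat list \<Rightarrow> bool" where
  "hadj n k x y \<longleftrightarrow> x \<in> hverts n k \<and> y \<in> hverts n k \<and> x \<noteq> y \<and>
     (rule1 k x y \<or> rule2 k x y \<or> rule2 k y x \<or> rule3 k x y)"

definition htriangles :: "nat \<Rightarrow> nat \<Rightarrow> nat list set set" where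
  "htriangles n k = {T. T \<subseteq> hverts n k \<and> card T = 3 \<and>
      (\<forall>x\<in>T. \<forall>y\<in>T. x \<noteq> y \<longrightarrow> hadj n k x y)}"

end

theory Submission
  imports Defs
begin

text \<open>Splitting words by their first letter, H(n, k+1) consists of the n copies a H(n, k),
  a < n, joined only by the edges 0...0 ~ y with y zero-free (rule (R2) with i = 0) and
  a0...0 ~ b0...0 for distinct nonzero a, b (rule (R3) with i = 1). So a triangle of H(n, k+1) lies
  in one copy, or consists of 0...0 and two zero-free words differing only in the last letter, or
  consists of three words a0...0 with a \<noteq> 0. This gives the recurrence
  T(k+1) = n T(k) + (n - 1)^k C(n - 1, 2) + C(n - 1, 3) with T(1) = C(n, 3), and the closed form
  follows by induction on k.\<close>

section \<open>Adjacency along the first letter\<close>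

lemma rule1_Cons:
  assumes "k \<ge> 1" "length x = k"
  shows "rule1 (Suc k) (a # x) (b # y) \<longleftrightarrow> a = b \<and> rule1 k x y"
proof
  assume "rule1 (Suc k) (a # x) (b # y)"
  then obtain p c d where "length p = k" "a # x = p @ [c]" "b # y = p @ [d]" "c \<noteq> d"
    unfolding rule1_def by auto
  with assms show "a = b \<and> rule1 k x y"
    unfolding rule1_def by (cases p) auto
next
  assume "a = b \<and> rule1 k x y"
  then obtain p c d where "a = b" "length p = k - 1" "x = p @ [c]" "y = p @ [d]" "c \<noteq> d"
    unfolding rule1_def by auto
  with assms show "rule1 (Suc k) (a # x) (b # y)"
    unfolding rule1_def by (intro exI[of _ "a # p"]) auto
qed

lemma in_set_drop_conv_nth: "x \<in> set (drop i ys) \<longleftrightarrow> (\<exists>j. i \<le> j \<and> j < length ys \<and> ys ! j = x)"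
proof
  assume "x \<in> set (drop i ys)"
  then obtain l where "l < length ys - i" "ys ! (i + l) = x" by (auto simp: in_set_conv_nth)
  then show "\<exists>j. i \<le> j \<and> j < length ys \<and> ys ! j = x" by (intro exI[of _ "i + l"]) auto
next
  assume "\<exists>j. i \<le> j \<and> j < length ys \<and> ys ! j = x"
  then obtain j where "i \<le> j" "j < length ys" "ys ! j = x" by blast
  then show "x \<in> set (drop i ys)" unfolding in_set_conv_nth by (intro exI[of _ "j - i"]) auto
qed

lemma rule2_iff_drop:
  "rule2 k x y \<longleftrightarrow> length y = k \<and>
     (\<exists>i. i + 2 \<le> k \<and> x = take i y @ replicate (k - i) 0 \<and> 0 \<notin> set (drop i y))"
  unfolding rule2_def in_set_drop_conv_nth by auto

lemma rule2_Cons: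
  assumes "k \<ge> 1" "length x = k" "length y = k"
  shows "rule2 (Suc k) (a # x) (b # y) \<longleftrightarrow>
     (a = 0 \<and> x = replicate k 0 \<and> b \<noteq> 0 \<and> 0 \<notin> set y) \<or> (a = b \<and> rule2 k x y)"
proof -
  have ex_split: "(\<exists>i. P i) \<longleftrightarrow> P 0 \<or> (\<exists>i. P (Suc i))" for P by (metis not0_implies_Suc)
  show ?thesis
    unfolding rule2_iff_drop ex_split[where P = "\<lambda>i. i + 2 \<le> Suc k \<and> _ i"]
    using assms by simp blast
qed

lemma rule3_iff_prefix:
  "rule3 k x y \<longleftrightarrow> (\<exists>p c d. length p + 2 \<le> k \<and> c \<noteq> 0 \<and> d \<noteq> 0 \<and> c \<noteq> d \<and>
      x = p @ c # replicate (k - Suc (length p)) 0 \<and> y = p @ d # replicate (k - Suc (length p)) 0)"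
    (is "_ \<longleftrightarrow> ?prefix")
proof
  assume "rule3 k x y"
  then obtain i p c d where "1 \<le> i" "i + 1 \<le> k" "length p = i - 1" "c \<noteq> 0" "d \<noteq> 0" "c \<noteq> d"
      "x = p @ [c] @ replicate (k - i) 0" "y = p @ [d] @ replicate (k - i) 0"
    unfolding rule3_def by blast
  then show ?prefix by (intro exI[of _ p] exI[of _ c] exI[of _ d]) auto
next
  assume ?prefix
  then obtain p c d where "length p + 2 \<le> k" "c \<noteq> 0" "d \<noteq> 0" "c \<noteq> d"
      "x = p @ c # replicate (k - Suc (length p)) 0" "y = p @ d # replicate (k - Suc (length p)) 0"
    by blast
  then show "rule3 k x y"
    unfolding rule3_def by (intro exI[of _ "Suc (length p)"] exI[of _ p] exI[of _ c] exI[of _ d]) auto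
qed

lemma rule3_Cons:
  assumes "k \<ge> 1" "length x = k"
  shows "rule3 (Suc k) (a # x) (b # y) \<longleftrightarrow>
     (a \<noteq> 0 \<and> b \<noteq> 0 \<and> a \<noteq> b \<and> x = replicate k 0 \<and> y = replicate k 0) \<or> (a = b \<and> rule3 k x y)"
proof -
  have ex_split: "(\<exists>p. P p) \<longleftrightarrow> P [] \<or> (\<exists>e p. P (e # p))" for P :: "nat list \<Rightarrow> bool"
    by (metis list.exhaust)
  show ?thesis
    unfolding rule3_iff_prefix ex_split[where P = "\<lambda>p. \<exists>c d. length p + 2 \<le> Suc k \<and> _ p c d"]
    using assms by auto
qed

lemma Cons_in_hverts_iff: "a # x \<in> hverts n (Suc k) \<longleftrightarrow> a < n \<and> x \<in> hverts n k"
  unfolding hverts_def by auto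

lemma length_of_hverts: "x \<in> hverts n k \<Longrightarrow> length x = k"
  unfolding hverts_def by auto

lemma hadj_sym: "hadj n k x y \<Longrightarrow> hadj n k y x"
  unfolding hadj_def rule1_def rule3_def by blast

lemma triangle_in_htriangles:
  assumes "hadj n k x y" "hadj n k x z" "hadj n k y z"
  shows "{x, y, z} \<in> htriangles n k"
proof -
  have "card {x, y, z} = 3" using assms unfolding hadj_def by auto
  then show ?thesis using assms hadj_sym unfolding htriangles_def hadj_def by blast
qed

lemma hadj_Cons_same_head:
  assumes "k \<ge> 1"
  shows "hadj n (Suc k) (a # x) (a # y) \<longleftrightarrow> a < n \<and> hadj n k x y"
  unfolding hadj_def Cons_in_hverts_iff
  using rule1_Cons rule2_Cons rule3_Cons assms length_of_hverts by auto

lemma hadj_Cons_distinct_heads: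
  assumes "k \<ge> 1" "a \<noteq> b"
  shows "hadj n (Suc k) (a # x) (b # y) \<longleftrightarrow> a < n \<and> b < n \<and> x \<in> hverts n k \<and> y \<in> hverts n k \<and>
    ((a = 0 \<and> x = replicate k 0 \<and> b \<noteq> 0 \<and> 0 \<notin> set y) \<or>
     (b = 0 \<and> y = replicate k 0 \<and> a \<noteq> 0 \<and> 0 \<notin> set x) \<or>
     (a \<noteq> 0 \<and> b \<noteq> 0 \<and> x = replicate k 0 \<and> y = replicate k 0))"
  unfolding hadj_def Cons_in_hverts_iff
  using rule1_Cons rule2_Cons rule3_Cons assms length_of_hverts by auto

lemma rule1_if_hadj_zero_free:
  assumes "hadj n k x y" "0 \<notin> set x" "0 \<notin> set y"
  shows "rule1 k x y"
  using assms unfolding hadj_def rule2_def rule3_def by auto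

section \<open>The triangles of H(n, k+1)\<close>

definition zero_free_words :: "nat \<Rightarrow> nat \<Rightarrow> nat list set" where
  "zero_free_words n k = {xs. length xs = k \<and> set xs \<subseteq> {1..<n}}"

definition block_triangles :: "nat \<Rightarrow> nat \<Rightarrow> nat list set set" where
  "block_triangles n k = (\<lambda>(a, T). (#) a ` T) ` ({..<n} \<times> htriangles n k)"

definition zero_triangles :: "nat \<Rightarrow> nat \<Rightarrow> nat list set set" where
  "zero_triangles n k = (\<lambda>(p, B). insert (replicate (Suc k) 0) ((\<lambda>c. p @ [c]) ` B)) `
      (zero_free_words n k \<times> {B. B \<subseteq> {1..<n} \<and> card B = 2})"

text \<open>The corners a0...0, a \<noteq> 0, are pairwise adjacent by (R3) with i = 1.\<close>

definition corner_triangles :: "nat \<Rightarrow> nat \<Rightarrow> nat list set set" where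
  "corner_triangles n k = {T. T \<subseteq> (\<lambda>a. a # replicate k 0) ` {1..<n} \<and> card T = 3}"

lemma triangle_with_common_head:
  assumes k: "k \<ge> 1" and T: "T \<in> htriangles n (Suc k)" and hd_T: "\<And>u. u \<in> T \<Longrightarrow> hd u = a"
  shows "T \<in> block_triangles n k"
proof -
  have V: "T \<subseteq> hverts n (Suc k)" and card_T: "card T = 3"
    and adj: "\<And>u v. u \<in> T \<Longrightarrow> v \<in> T \<Longrightarrow> u \<noteq> v \<Longrightarrow> hadj n (Suc k) u v"
    using T unfolding htriangles_def by auto
  have Cons_tl: "a # tl u = u" if "u \<in> T" for u
    using that V hd_T[OF that] by (cases u) (auto dest!: length_of_hverts)
  then have T_eq: "T = (#) a ` tl ` T" by (force simp: image_image)
  have inj: "inj_on tl T" by (metis Cons_tl inj_onI)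
  have tl_mem: "a < n \<and> tl u \<in> hverts n k" if "u \<in> T" for u
    using V that Cons_tl[OF that] by (metis Cons_in_hverts_iff subsetD)
  have "tl ` T \<in> htriangles n k"
    unfolding htriangles_def
  proof (intro CollectI conjI ballI impI)
    show "tl ` T \<subseteq> hverts n k" using tl_mem by blast
    show "card (tl ` T) = 3" using card_image[OF inj] card_T by simp
    fix x y assume "x \<in> tl ` T" "y \<in> tl ` T" "x \<noteq> y"
    then obtain u v where "u \<in> T" "v \<in> T" "u \<noteq> v" "x = tl u" "y = tl v" by blast
    then show "hadj n k x y" using adj Cons_tl hadj_Cons_same_head[OF k] by metis
  qed
  moreover have "a < n" using tl_mem card_T by (metis card.empty ex_in_conv zero_neq_numeral)
  ultimately show ?thesis unfolding block_triangles_def using T_eq by blast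
qed

lemma triangle_through_zero:
  assumes k: "k \<ge> 1" and "b \<noteq> 0"
    and zv: "hadj n (Suc k) (replicate (Suc k) 0) (b # y)"
    and zw: "hadj n (Suc k) (replicate (Suc k) 0) w"
    and vw: "hadj n (Suc k) (b # y) w"
  shows "{replicate (Suc k) 0, b # y, w} \<in> zero_triangles n k"
proof -
  have zero_free_if_adj: "c \<noteq> 0 \<Longrightarrow> hadj n (Suc k) (0 # replicate k 0) (c # z) \<Longrightarrow>
      c # z \<in> hverts n (Suc k) \<and> 0 \<notin> set (c # z)" for c z
    using hadj_Cons_distinct_heads[OF k, of 0 c] by (auto simp: Cons_in_hverts_iff)
  obtain c z where w: "w = c # z"
    using zw unfolding hadj_def by (cases w) (auto simp: hverts_def)
  have "c \<noteq> 0"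
  proof
    assume "c = 0"
    then have "z = replicate k 0"
      using hadj_sym[OF vw] hadj_Cons_distinct_heads[OF k] \<open>b \<noteq> 0\<close> w by auto
    then show False using zw \<open>c = 0\<close> w unfolding hadj_def by simp
  qed
  then have v_zf: "b # y \<in> hverts n (Suc k) \<and> 0 \<notin> set (b # y)"
    and w_zf: "w \<in> hverts n (Suc k) \<and> 0 \<notin> set w"
    using zero_free_if_adj zv zw w \<open>b \<noteq> 0\<close> by auto
  then obtain p d e where p: "length p = k" "b # y = p @ [d]" "w = p @ [e]" "d \<noteq> e"
    using rule1_if_hadj_zero_free[OF vw] unfolding rule1_def by auto
  have "set (b # y) \<subseteq> {1..<n}" "set w \<subseteq> {1..<n}"
    using v_zf w_zf unfolding hverts_def by (auto simp: Suc_le_eq dest!: subsetD)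
  then have "(p, {d, e}) \<in> zero_free_words n k \<times> {B. B \<subseteq> {1..<n} \<and> card B = 2}"
    using p unfolding zero_free_words_def by auto
  moreover have "{replicate (Suc k) 0, b # y, w} =
      (\<lambda>(p, B). insert (replicate (Suc k) 0) ((\<lambda>c. p @ [c]) ` B)) (p, {d, e})"
    using p(2,3) by simp
  ultimately show ?thesis unfolding zero_triangles_def by (rule rev_image_eqI)
qed

lemma hadj_from_corner:
  assumes k: "k \<ge> 1" and "d \<noteq> 0" "d \<noteq> c"
    and adj: "hadj n (Suc k) (d # replicate k 0) (c # z)"
  shows "c \<in> {1..<n} \<and> z = replicate k 0"
proof -
  have "0 \<in> set (replicate k (0::nat))" using k by simp
  then show ?thesis using adj hadj_Cons_distinct_heads[OF k \<open>d \<noteq> c\<close>] \<open>d \<noteq> 0\<close> by auto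
qed

lemma hadj_corners:
  assumes k: "k \<ge> 1" and "a \<in> {1..<n}" "b \<in> {1..<n}" "a \<noteq> b"
  shows "hadj n (Suc k) (a # replicate k 0) (b # replicate k 0)"
proof -
  have "replicate k 0 \<in> hverts n k" using assms unfolding hverts_def by auto
  then show ?thesis using assms hadj_Cons_distinct_heads[OF k] by auto
qed

lemma common_neighbour_of_corners:
  assumes k: "k \<ge> 1" and "a \<noteq> 0" "b \<noteq> 0" "a \<noteq> b"
    and aw: "hadj n (Suc k) (a # replicate k 0) w" and bw: "hadj n (Suc k) (b # replicate k 0) w"
  shows "w \<in> (\<lambda>c. c # replicate k 0) ` {1..<n}"
proof -
  obtain c z where w: "w = c # z"
    using aw unfolding hadj_def by (cases w) (auto simp: hverts_def)
  have "c \<in> {1..<n} \<and> z = replicate k 0"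
  proof (cases "c = a")
    case True
    then show ?thesis using hadj_from_corner[OF k \<open>b \<noteq> 0\<close>, of c n z] bw w \<open>a \<noteq> b\<close> by simp
  next
    case False
    then show ?thesis using hadj_from_corner[OF k \<open>a \<noteq> 0\<close>, of c n z] aw w by simp
  qed
  then show ?thesis using w by auto
qed

lemma htriangles_Suc_subset:
  assumes k: "k \<ge> 1" and T: "T \<in> htriangles n (Suc k)"
  shows "T \<in> block_triangles n k \<union> zero_triangles n k \<union> corner_triangles n k"
proof (cases "\<exists>a. \<forall>u\<in>T. hd u = a")
  case True
  then show ?thesis using triangle_with_common_head[OF k T] by blast
next
  case False
  have V: "T \<subseteq> hverts n (Suc k)" and card_T: "card T = 3"
    and adj: "\<And>u v. u \<in> T \<Longrightarrow> v \<in> T \<Longrightarrow> u \<noteq> v \<Longrightarrow> hadj n (Suc k) u v"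
    using T unfolding htriangles_def by auto
  from False obtain u v where "u \<in> T" "v \<in> T" "hd u \<noteq> hd v" by metis
  moreover obtain w where "T = {u, v, w}" "w \<noteq> u" "w \<noteq> v"
  proof -
    have "card (T - {u, v}) = 1"
      using card_T \<open>u \<in> T\<close> \<open>v \<in> T\<close> \<open>hd u \<noteq> hd v\<close>
      by (subst card_Diff_subset) (auto simp: card_insert_if)
    then obtain w where "T - {u, v} = {w}" by (rule card_1_singletonE)
    then show thesis using that \<open>u \<in> T\<close> \<open>v \<in> T\<close> by auto
  qed
  moreover obtain a x where "u = a # x"
    using V \<open>u \<in> T\<close> by (cases u) (auto dest!: length_of_hverts)
  moreover obtain b y where "v = b # y"
    using V \<open>v \<in> T\<close> by (cases v) (auto dest!: length_of_hverts)
  ultimately have T_eq: "T = {a # x, b # y, w}" and "a \<noteq> b"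
    and uv: "hadj n (Suc k) (a # x) (b # y)"
    and uw: "hadj n (Suc k) (a # x) w" "hadj n (Suc k) w (a # x)"
    and vw: "hadj n (Suc k) (b # y) w" "hadj n (Suc k) w (b # y)"
    using adj by auto
  from uv hadj_Cons_distinct_heads[OF k \<open>a \<noteq> b\<close>] consider
      "a = 0" "x = replicate k 0" "b \<noteq> 0"
    | "b = 0" "y = replicate k 0" "a \<noteq> 0"
    | "a \<noteq> 0" "b \<noteq> 0" "a < n" "b < n" "x = replicate k 0" "y = replicate k 0"
    by blast
  then show ?thesis
  proof cases
    case 1
    then show ?thesis using triangle_through_zero[OF k _ _ _ vw(1)] uv uw T_eq by auto
  next
    case 2
    then have "{b # y, a # x, w} \<in> zero_triangles n k"
      using triangle_through_zero[OF k _ _ _ uw(1)] hadj_sym[OF uv] vw by auto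
    then show ?thesis using T_eq by (simp add: insert_commute)
  next
    case 3
    then have "w \<in> (\<lambda>c. c # replicate k 0) ` {1..<n}"
      using common_neighbour_of_corners[OF k _ _ \<open>a \<noteq> b\<close>] uw vw by simp
    with 3 have "T \<subseteq> (\<lambda>c. c # replicate k 0) ` {1..<n}" using T_eq by auto
    then show ?thesis using card_T unfolding corner_triangles_def by simp
  qed
qed

lemma block_triangles_subset:
  assumes k: "k \<ge> 1"
  shows "block_triangles n k \<subseteq> htriangles n (Suc k)"
proof
  fix T assume "T \<in> block_triangles n k"
  then obtain a S where "a < n" and S: "S \<in> htriangles n k" and T: "T = (#) a ` S"
    unfolding block_triangles_def by auto
  then show "T \<in> htriangles n (Suc k)"
    using S unfolding htriangles_def
    by (auto simp: card_image Cons_in_hverts_iff hadj_Cons_same_head[OF k])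
qed

lemma hadj_zeros_zero_free:
  assumes k: "k \<ge> 1" and "p \<in> zero_free_words n k" "c \<in> {1..<n}"
  shows "hadj n (Suc k) (replicate (Suc k) 0) (p @ [c])"
proof -
  obtain q r where p: "p = q # r" "length r = k - 1" "set (q # r) \<subseteq> {1..<n}"
    using assms unfolding zero_free_words_def by (cases p) auto
  then have "0 \<notin> set (r @ [c])" "r @ [c] \<in> hverts n k" "replicate k 0 \<in> hverts n k"
    using \<open>c \<in> {1..<n}\<close> k unfolding hverts_def by auto
  then show ?thesis
    using p hadj_Cons_distinct_heads[OF k, of 0 q n "replicate k 0" "r @ [c]"] by auto
qed

lemma zero_triangles_subset:
  assumes k: "k \<ge> 1"
  shows "zero_triangles n k \<subseteq> htriangles n (Suc k)"
proof
  fix T assume "T \<in> zero_triangles n k"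
  then obtain p B where p: "p \<in> zero_free_words n k" and B: "B \<subseteq> {1..<n}" "card B = 2"
    and T: "T = insert (replicate (Suc k) 0) ((\<lambda>c. p @ [c]) ` B)"
    unfolding zero_triangles_def by auto
  obtain c d where "B = {c, d}" "c \<noteq> d" using B(2) by (meson card_2_iff)
  with B T have cd: "c \<in> {1..<n}" "d \<in> {1..<n}" "c \<noteq> d"
    and T_eq: "T = {replicate (Suc k) 0, p @ [c], p @ [d]}" by auto
  have "rule1 (Suc k) (p @ [c]) (p @ [d])"
    using p cd unfolding rule1_def zero_free_words_def by auto
  moreover have zc: "hadj n (Suc k) (replicate (Suc k) 0) (p @ [c])"
    and zd: "hadj n (Suc k) (replicate (Suc k) 0) (p @ [d])"
    using hadj_zeros_zero_free[OF k p] cd by auto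
  ultimately have "hadj n (Suc k) (p @ [c]) (p @ [d])"
    using \<open>c \<noteq> d\<close> unfolding hadj_def by auto
  then show "T \<in> htriangles n (Suc k)"
    unfolding T_eq using zc zd by (rule triangle_in_htriangles[rotated 2])
qed

lemma corner_triangles_subset:
  assumes k: "k \<ge> 1"
  shows "corner_triangles n k \<subseteq> htriangles n (Suc k)"
proof
  fix T assume "T \<in> corner_triangles n k"
  then have TC: "T \<subseteq> (\<lambda>a. a # replicate k 0) ` {1..<n}" and "card T = 3"
    unfolding corner_triangles_def by auto
  then obtain x y z where T: "T = {x, y, z}" "x \<noteq> y" "y \<noteq> z" "x \<noteq> z"
    by (auto simp: card_3_iff)
  obtain a b c where abc: "a \<in> {1..<n}" "b \<in> {1..<n}" "c \<in> {1..<n}"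
    and xyz: "x = a # replicate k 0" "y = b # replicate k 0" "z = c # replicate k 0"
    using TC unfolding T(1) insert_subset by (elim conjE imageE) blast
  with T have "a \<noteq> b" "a \<noteq> c" "b \<noteq> c" by auto
  with abc show "T \<in> htriangles n (Suc k)"
    unfolding T(1) xyz by (intro triangle_in_htriangles hadj_corners[OF k])
qed

lemma htriangles_Suc:
  assumes "k \<ge> 1"
  shows "htriangles n (Suc k) = block_triangles n k \<union> zero_triangles n k \<union> corner_triangles n k"
  using htriangles_Suc_subset block_triangles_subset zero_triangles_subset corner_triangles_subset assms
  by blast

lemma finite_htriangles: "finite (htriangles n k)"
proof -
  have "finite (hverts n k)"
    using finite_lists_length_eq[of "{..<n}" k] unfolding hverts_def by (simp add: conj_commute)
  then show ?thesis unfolding htriangles_def by (auto intro: finite_subset[of _ "Pow (hverts n k)"])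
qed

lemma card_block_triangles: "card (block_triangles n k) = n * card (htriangles n k)"
proof -
  have "inj_on (\<lambda>(a, T). (#) a ` T) ({..<n} \<times> htriangles n k)"
  proof (rule inj_onI, clarify)
    fix a b T U assume "T \<in> htriangles n k" and eq: "(#) a ` T = (#) b ` U"
    then have "T \<noteq> {}" unfolding htriangles_def by auto
    then have "a = b" using eq by auto
    moreover have "T = U" using eq by (simp add: \<open>a = b\<close> inj_image_eq_iff)
    ultimately show "a = b \<and> T = U" ..
  qed
  then show ?thesis
    unfolding block_triangles_def by (simp add: card_image card_cartesian_product)
qed

lemma card_zero_triangles: "card (zero_triangles n k) = (n - 1) ^ k * ((n - 1) choose 2)"
proof -
  let ?z = "replicate (Suc k) (0::nat)"
  have z_notin: "?z \<notin> (\<lambda>c. p @ [c]) ` B" if "B \<subseteq> {1..<n}" for p B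
  proof
    assume "?z \<in> (\<lambda>c. p @ [c]) ` B"
    then obtain c where "c \<in> B" and eq: "p @ [c] = ?z" by (auto simp del: replicate_Suc)
    have "c = 0" using arg_cong[OF eq, of last] by (simp del: replicate_Suc)
    then show False using that \<open>c \<in> B\<close> by auto
  qed
  have "inj_on (\<lambda>(p, B). insert ?z ((\<lambda>c. p @ [c]) ` B))
      (zero_free_words n k \<times> {B. B \<subseteq> {1..<n} \<and> card B = 2})"
  proof (rule inj_onI, clarify)
    fix p q B C
    assume B: "B \<subseteq> {1..<n}" "card B = 2" and C: "C \<subseteq> {1..<n}"
      and "insert ?z ((\<lambda>c. p @ [c]) ` B) = insert ?z ((\<lambda>c. q @ [c]) ` C)"
    then have eq: "(\<lambda>c. p @ [c]) ` B = (\<lambda>c. q @ [c]) ` C"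
      using z_notin[OF B(1)] z_notin[OF C] by (simp add: insert_ident)
    have "B \<noteq> {}" using B by auto
    then obtain c c' where "p @ [c] = q @ [c']" using eq by blast
    then have "p = q" by simp
    moreover have "B = C" using eq by (simp add: \<open>p = q\<close> inj_image_eq_iff inj_def)
    ultimately show "p = q \<and> B = C" ..
  qed
  then have "card (zero_triangles n k) =
      card (zero_free_words n k) * card {B. B \<subseteq> {1..<n} \<and> card B = 2}"
    unfolding zero_triangles_def by (simp add: card_image card_cartesian_product)
  also have "card (zero_free_words n k) = (n - 1) ^ k"
    using card_lists_length_eq[of "{1..<n}" k] unfolding zero_free_words_def by (simp add: conj_commute)
  also have "card {B. B \<subseteq> {1..<n} \<and> card B = 2} = (n - 1) choose 2"
    using n_subsets[of "{1..<n}" 2] by simp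
  finally show ?thesis .
qed

lemma card_corner_triangles: "card (corner_triangles n k) = (n - 1) choose 3"
proof -
  have "inj_on (\<lambda>a. a # replicate k (0::nat)) {1..<n}" by (simp add: inj_on_def)
  then have "card ((\<lambda>a. a # replicate k (0::nat)) ` {1..<n}) = n - 1" by (simp add: card_image)
  then show ?thesis
    unfolding corner_triangles_def using n_subsets[of "(\<lambda>a. a # replicate k (0::nat)) ` {1..<n}" 3] by simp
qed

lemma block_triangle_heads:
  "T \<in> block_triangles n k \<Longrightarrow> u \<in> T \<Longrightarrow> v \<in> T \<Longrightarrow> hd u = hd v"
  unfolding block_triangles_def by auto

lemma zero_triangle_heads:
  assumes "k \<ge> 1" "T \<in> zero_triangles n k"
  shows "replicate (Suc k) 0 \<in> T" "\<exists>u\<in>T. hd u \<noteq> 0"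
proof -
  obtain p B where p: "p \<in> zero_free_words n k" and B: "B \<subseteq> {1..<n}" "card B = 2"
    and T: "T = insert (replicate (Suc k) 0) ((\<lambda>c. p @ [c]) ` B)"
    using assms(2) unfolding zero_triangles_def by auto
  obtain c where "c \<in> B" using B(2) by fastforce
  moreover obtain q r where "p = q # r" "q \<noteq> 0"
    using p assms(1) unfolding zero_free_words_def by (cases p) auto
  ultimately show "replicate (Suc k) 0 \<in> T" "\<exists>u\<in>T. hd u \<noteq> 0" using T by auto
qed

lemma corner_triangle_heads:
  assumes "T \<in> corner_triangles n k"
  shows "\<forall>u\<in>T. hd u \<noteq> 0" "\<exists>u\<in>T. \<exists>v\<in>T. hd u \<noteq> hd v"
proof -
  have TC: "T \<subseteq> (\<lambda>a. a # replicate k 0) ` {1..<n}" and "card T = 3"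
    using assms unfolding corner_triangles_def by auto
  then obtain u v where "u \<in> T" "v \<in> T" "u \<noteq> v" by (auto simp: card_3_iff)
  moreover obtain a b where "u = a # replicate k 0" "v = b # replicate k 0"
    using TC \<open>u \<in> T\<close> \<open>v \<in> T\<close> by blast
  ultimately show "\<exists>u\<in>T. \<exists>v\<in>T. hd u \<noteq> hd v" by force
  show "\<forall>u\<in>T. hd u \<noteq> 0" using TC by auto
qed

lemma card_htriangles_Suc:
  assumes k: "k \<ge> 1"
  shows "card (htriangles n (Suc k)) =
    n * card (htriangles n k) + (n - 1) ^ k * ((n - 1) choose 2) + ((n - 1) choose 3)"
proof -
  have fin: "finite (block_triangles n k)" "finite (zero_triangles n k)" "finite (corner_triangles n k)"
    using finite_htriangles[of n "Suc k"] htriangles_Suc[OF k] by (auto intro: finite_subset)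
  have not_block: "T \<notin> block_triangles n k" if "u \<in> T" "v \<in> T" "hd u \<noteq> hd v" for T u v
    using block_triangle_heads that by blast
  have zero_not_block: "T \<notin> block_triangles n k" if T: "T \<in> zero_triangles n k" for T
  proof -
    obtain u where "u \<in> T" "hd u \<noteq> 0" using zero_triangle_heads(2)[OF k T] by blast
    then show ?thesis using not_block[OF zero_triangle_heads(1)[OF k T]] by simp
  qed
  have corner_not_zero: "T \<notin> zero_triangles n k" if "T \<in> corner_triangles n k" for T
    using corner_triangle_heads(1)[OF that] zero_triangle_heads(1)[OF k] by force
  have "block_triangles n k \<inter> zero_triangles n k = {}"
    using zero_not_block by blast
  moreover have "(block_triangles n k \<union> zero_triangles n k) \<inter> corner_triangles n k = {}"
    using corner_not_zero corner_triangle_heads(2) not_block by blast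
  ultimately show ?thesis
    using fin unfolding htriangles_Suc[OF k]
    by (simp add: card_Un_disjoint card_block_triangles card_zero_triangles card_corner_triangles)
qed

lemma card_htriangles_one: "card (htriangles n 1) = n choose 3"
proof -
  have V: "hverts n 1 = (\<lambda>a. [a]) ` {..<n}"
    unfolding hverts_def by (auto simp: length_Suc_conv)
  have "hadj n 1 x y \<longleftrightarrow> x \<in> hverts n 1 \<and> y \<in> hverts n 1 \<and> x \<noteq> y" for x y
    unfolding hadj_def V rule1_def by auto
  then have "htriangles n 1 = {T. T \<subseteq> hverts n 1 \<and> card T = 3}"
    unfolding htriangles_def by auto
  moreover have "finite (hverts n 1)" "card (hverts n 1) = n"
    unfolding V by (simp_all add: card_image inj_on_def)
  ultimately show ?thesis using n_subsets[of "hverts n 1" 3] by simp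
qed

lemma of_nat_choose_2: "(of_nat (m choose 2) :: 'a :: field_char_0) = of_nat m * (of_nat m - 1) / 2"
proof (induction m)
  case (Suc m)
  have "Suc m choose 2 = m + (m choose 2)" by (simp add: numeral_2_eq_2)
  then show ?case using Suc by (simp add: field_simps)
qed simp

lemma of_nat_choose_3:
  "(of_nat (m choose 3) :: 'a :: field_char_0) = of_nat m * (of_nat m - 1) * (of_nat m - 2) / 6"
proof (induction m)
  case (Suc m)
  have "Suc m choose 3 = (m choose 2) + (m choose 3)" by (simp add: numeral_3_eq_3 numeral_2_eq_2)
  then have eq: "(of_nat (Suc m choose 3) :: 'a) =
      of_nat m * (of_nat m - 1) / 2 + of_nat m * (of_nat m - 1) * (of_nat m - 2) / 6"
    by (simp only: of_nat_add of_nat_choose_2 Suc.IH)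
  show ?case unfolding eq by (simp add: field_simps)
qed simp

theorem mainTheorem11:
  fixes n k :: nat
  assumes "n \<ge> 2" and "k \<ge> 1"
  shows "(of_nat (card (htriangles n k)) :: rat) =
    (1/2) * (of_nat n - 2) * (1 - of_nat n / 3 - (of_nat n - 1) ^ (k + 1)
       + (2/3) * of_nat n ^ k * (2 * of_nat n - 3))"
  using assms(2)
proof (induction k rule: nat_induct_at_least)
  case base
  show ?case
    unfolding card_htriangles_one of_nat_choose_3 by (simp add: field_simps)
next
  case (Suc k)
  have "of_nat (n - 1) = (of_nat n - 1 :: rat)" using assms(1) by (simp add: of_nat_diff)
  then have "(of_nat (card (htriangles n (Suc k))) :: rat) =
      of_nat n * of_nat (card (htriangles n k)) + (of_nat n - 1) ^ k * ((of_nat n - 1) * (of_nat n - 2) / 2)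
      + (of_nat n - 1) * (of_nat n - 2) * (of_nat n - 3) / 6"
    by (simp add: card_htriangles_Suc[OF Suc.hyps] of_nat_choose_2 of_nat_choose_3 algebra_simps)
  then show ?case unfolding Suc.IH by (simp add: field_simps)
qed

end
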